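(* Assume $q^{2(\alpha,\lambda)}=-q^{-2}$, and let $M_\lambda$ be the quotient of the parabolic Verma module $\hat M_\lambda$ by the submodule $U_\hbar(\mathfrak{sp}(4))f_\delta v_\lambda$. Then $M_\lambda$ is an irreducible $U_\hbar(\mathfrak{sp}(4))$-module.
   Context: Setting: $\alpha=\varepsilon_1-\varepsilon_2$, $\beta=2\varepsilon_2$, $\gamma=\alpha+\beta$, $\delta=2\alpha+\beta$ with $(\varepsilon_i,\varepsilon_j)=\delta_{ij}$; $q=e^\hbar$. $U_\hbar(\mathfrak{g})$, $\mathfrak{g}=\mathfrak{sp}(4)$, is generated by $e_\alpha,e_\beta,f_\alpha,f_\beta,h_\alpha,h_\beta$ with $[h_\alpha,h_\beta]=0$, $[h_\mu,e_\nu]=(\mu,\nu)e_\nu$, $[h_\mu,f_\nu]=-(\mu,\nu)f_\nu$ for $\mu,\nu\in\{\alpha,\beta\}$, $[e_\alpha,f_\alpha]=\frac{q^{h_\alpha}-q^{-h_\alpha}}{q-q^{-1}}$, $[e_\beta,f_\beta]=\frac{q^{h_\beta}-q^{-h_\beta}}{q^2-q^{-2}}$, $[e_\alpha,f_\beta]=0=[e_\beta,f_\alpha]$, plus the quantum Serre relations $e_\alpha^3e_\beta-(q^2+1+q^{-2})e_\alpha^2e_\beta e_\alpha+(q^2+1+q^{-2})e_\alpha e_\beta e_\alpha^2-e_\beta e_\alpha^3=0$, $e_\beta^2e_\alpha-(q^2+q^{-2})e_\beta e_\alpha e_\beta+e_\alpha e_\beta^2=0$ and the same for $f$. Root vectors: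 $f_\gamma=f_\beta f_\alpha-q^{-2}f_\alpha f_\beta$, $f_\delta=f_\gamma f_\alpha-q^{2}f_\alpha f_\gamma$. Let $U_\hbar(\mathfrak{p}^+)$ be the subalgebra generated by $e_\alpha,e_\beta,f_\beta,h_\alpha,h_\beta$. For a weight $\lambda$ with $(\lambda,\beta)=0$, $\mathbb{C}_\lambda$ is the one-dimensional $U_\hbar(\mathfrak{p}^+)$-module with $e_\alpha,e_\beta,f_\beta,h_\beta\mapsto0$, $h_\alpha\mapsto(\alpha,\lambda)$ (so $q^{h_\alpha}$ acts by $q^{(\alpha,\lambda)}$); $\hat M_\lambda=U_\hbar(\mathfrak{g})\otimes_{U_\hbar(\mathfrak{p}^+)}\mathbb{C}_\lambda$, $v_\lambda=1\otimes1$. *)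

theory Defs
  imports "HOL-Analysis.Analysis"
begin

text \<open>Conventions. hbar is a nonzero complex number, q = exp hbar (assumed not a root of unity
in the theorem), and q to the power z means exp (hbar * z) for complex z.
A U_hbar(sp(4))-module is a complex vector space V (abstract type 'v with scalar
multiplication sc) with linear operators ea, eb, fa, fb, ha, hb (for e_alpha, e_beta,
f_alpha, f_beta, h_alpha, h_beta) which is a weight module (spanned by joint eigenvectors
of ha, hb), so that q^{h_alpha}, q^{h_beta} make sense (acting on a joint eigenvector of
eigenvalues (a,b) by q^a, q^b), and all defining relations of U_hbar(sp(4)) hold.
Inner products: (alpha,alpha)=2, (alpha,beta)=-2, (beta,beta)=4.\<close>

definition qp :: "complex \<Rightarrow> complex \<Rightarrow> complex" where
  "qp hbar z = exp (hbar * z)"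

definition comm :: "('v::ab_group_add \<Rightarrow> 'v) \<Rightarrow> ('v \<Rightarrow> 'v) \<Rightarrow> 'v \<Rightarrow> 'v" where
  "comm A B = (\<lambda>w. A (B w) - B (A w))"

definition is_weight_vec ::
  "(complex \<Rightarrow> 'v::ab_group_add \<Rightarrow> 'v) \<Rightarrow> ('v \<Rightarrow> 'v) \<Rightarrow> ('v \<Rightarrow> 'v) \<Rightarrow> complex \<Rightarrow> complex \<Rightarrow> 'v \<Rightarrow> bool" where
  "is_weight_vec sc ha hb a b w \<longleftrightarrow> ha w = sc a w \<and> hb w = sc b w"

definition serre3 :: "complex \<Rightarrow> ('v::ab_group_add \<Rightarrow> 'v) \<Rightarrow> ('v \<Rightarrow> 'v) \<Rightarrow> (complex \<Rightarrow> 'v \<Rightarrow> 'v) \<Rightarrow> bool" where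
  "serre3 q x y sc \<longleftrightarrow> (\<forall>w. x (x (x (y w))) - sc (q^2 + 1 + inverse q ^ 2) (x (x (y (x w))))
       + sc (q^2 + 1 + inverse q ^ 2) (x (y (x (x w)))) - y (x (x (x w))) = 0)"

definition serre2 :: "complex \<Rightarrow> ('v::ab_group_add \<Rightarrow> 'v) \<Rightarrow> ('v \<Rightarrow> 'v) \<Rightarrow> (complex \<Rightarrow> 'v \<Rightarrow> 'v) \<Rightarrow> bool" where
  "serre2 q y x sc \<longleftrightarrow> (\<forall>w. y (y (x w)) - sc (q^2 + inverse q ^ 2) (y (x (y w))) + x (y (y w)) = 0)"

definition Uq_sp4_module ::
  "complex \<Rightarrow> (complex \<Rightarrow> 'v::ab_group_add \<Rightarrow> 'v) \<Rightarrow> ('v \<Rightarrow> 'v) \<Rightarrow> ('v \<Rightarrow> 'v) \<Rightarrow> ('v \<Rightarrow> 'v)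
     \<Rightarrow> ('v \<Rightarrow> 'v) \<Rightarrow> ('v \<Rightarrow> 'v) \<Rightarrow> ('v \<Rightarrow> 'v) \<Rightarrow> bool" where
  "Uq_sp4_module hbar sc ea eb fa fb ha hb \<longleftrightarrow>
     (let q = exp hbar in
     vector_space sc \<and>
     (\<forall>A\<in>{ea, eb, fa, fb, ha, hb}. Vector_Spaces.linear sc sc A) \<and>
     module.span sc {w. \<exists>a b. is_weight_vec sc ha hb a b w} = UNIV \<and>
     comm ha hb = (\<lambda>w. 0) \<and>
     comm ha ea = (\<lambda>w. sc 2 (ea w)) \<and> comm ha eb = (\<lambda>w. sc (-2) (eb w)) \<and>
     comm hb ea = (\<lambda>w. sc (-2) (ea w)) \<and> comm hb eb = (\<lambda>w. sc 4 (eb w)) \<and>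
     comm ha fa = (\<lambda>w. sc (-2) (fa w)) \<and> comm ha fb = (\<lambda>w. sc 2 (fb w)) \<and>
     comm hb fa = (\<lambda>w. sc 2 (fa w)) \<and> comm hb fb = (\<lambda>w. sc (-4) (fb w)) \<and>
     (\<forall>a b w. is_weight_vec sc ha hb a b w \<longrightarrow>
        comm ea fa w = sc ((qp hbar a - qp hbar (-a)) / (q - inverse q)) w \<and>
        comm eb fb w = sc ((qp hbar b - qp hbar (-b)) / (q^2 - inverse q ^ 2)) w) \<and>
     comm ea fb = (\<lambda>w. 0) \<and> comm eb fa = (\<lambda>w. 0) \<and>
     serre3 q ea eb sc \<and> serre2 q eb ea sc \<and> serre3 q fa fb sc \<and> serre2 q fb fa sc)"

definition f_gamma :: "complex \<Rightarrow> (complex \<Rightarrow> 'v::ab_group_add \<Rightarrow> 'v) \<Rightarrow> ('v \<Rightarrow> 'v) \<Rightarrow> ('v \<Rightarrow> 'v) \<Rightarrow> 'v \<Rightarrow> 'v" where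
  "f_gamma hbar sc fa fb = (\<lambda>w. fb (fa w) - sc (inverse (exp hbar) ^ 2) (fa (fb w)))"

definition f_delta :: "complex \<Rightarrow> (complex \<Rightarrow> 'v::ab_group_add \<Rightarrow> 'v) \<Rightarrow> ('v \<Rightarrow> 'v) \<Rightarrow> ('v \<Rightarrow> 'v) \<Rightarrow> 'v \<Rightarrow> 'v" where
  "f_delta hbar sc fa fb = (\<lambda>w. f_gamma hbar sc fa fb (fa w) - sc (exp hbar ^ 2) (fa (f_gamma hbar sc fa fb w)))"

definition is_submodule ::
  "(complex \<Rightarrow> 'v::ab_group_add \<Rightarrow> 'v) \<Rightarrow> ('v \<Rightarrow> 'v) \<Rightarrow> ('v \<Rightarrow> 'v) \<Rightarrow> ('v \<Rightarrow> 'v)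
     \<Rightarrow> ('v \<Rightarrow> 'v) \<Rightarrow> ('v \<Rightarrow> 'v) \<Rightarrow> ('v \<Rightarrow> 'v) \<Rightarrow> 'v set \<Rightarrow> bool" where
  "is_submodule sc ea eb fa fb ha hb W \<longleftrightarrow>
     module.subspace sc W \<and> (\<forall>A\<in>{ea, eb, fa, fb, ha, hb}. A ` W \<subseteq> W)"

definition irreducible_module ::
  "(complex \<Rightarrow> 'v::ab_group_add \<Rightarrow> 'v) \<Rightarrow> ('v \<Rightarrow> 'v) \<Rightarrow> ('v \<Rightarrow> 'v) \<Rightarrow> ('v \<Rightarrow> 'v)
     \<Rightarrow> ('v \<Rightarrow> 'v) \<Rightarrow> ('v \<Rightarrow> 'v) \<Rightarrow> ('v \<Rightarrow> 'v) \<Rightarrow> bool" where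
  "irreducible_module sc ea eb fa fb ha hb \<longleftrightarrow>
     (UNIV :: 'v set) \<noteq> {0} \<and>
     (\<forall>W. is_submodule sc ea eb fa fb ha hb W \<longrightarrow> W = {0} \<or> W = UNIV)"

text \<open>Pairing of weights: lambda = l1 eps1 + l2 eps2, alpha = eps1 - eps2, beta = 2 eps2.\<close>
definition ip_alpha :: "complex \<times> complex \<Rightarrow> complex" where
  "ip_alpha l = fst l - snd l"
definition ip_beta :: "complex \<times> complex \<Rightarrow> complex" where
  "ip_beta l = 2 * snd l"

end

theory Submission
  imports Defs
begin

text \<open>Put \<open>a = (\<alpha>,\<lambda>)\<close> and \<open>u(p,r) = f\<^sub>\<alpha>^p f\<^sub>\<gamma>^r v\<close>. The quantum Serre relations say that
\<open>f\<^sub>\<delta>\<close> commutes with \<open>f\<^sub>\<alpha>\<close> and \<open>f\<^sub>\<beta>\<close>, so \<open>f\<^sub>\<delta>\<close> kills every \<open>u(p,r)\<close>; with this, each generator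
maps \<open>u(p,r)\<close> to a multiple of some \<open>u(p',r')\<close>, so the \<open>u(p,r)\<close> span a submodule, which is
everything because \<open>v\<close> generates the module. The \<open>u(p,r)\<close> have pairwise distinct weights, so
every nonzero submodule contains one of them. Finally
\<open>e\<^sub>\<alpha> u(p+1,r) = [p+1][a-p] u(p,r)\<close> and \<open>e\<^sub>\<beta> u(p,r+1) = [r+1]_(q^2) u(p+1,r)\<close>; for \<open>q\<close> not a
root of unity the first coefficient vanishes only if \<open>q^(2(a-p)) = 1\<close>, which the hypothesis
\<open>q^(2a) = -q^(-2)\<close> excludes, and the second never vanishes. Lowering thus reaches \<open>v\<close>.\<close>

section \<open>Quantum numbers\<close>

lemma qp_add: "qp hbar (x + y) = qp hbar x * qp hbar y"
  by (simp add: qp_def distrib_left exp_add)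

lemma qp_minus: "qp hbar (- x) = inverse (qp hbar x)"
  by (simp add: qp_def exp_minus)

lemma qp_diff: "qp hbar (x - y) = qp hbar x * inverse (qp hbar y)"
  by (simp add: qp_def right_diff_distrib exp_diff divide_inverse)

lemma qp_of_nat: "qp hbar (of_nat n) = exp hbar ^ n"
  by (simp add: qp_def exp_of_nat_mult[symmetric] mult.commute)

lemma qp_2: "qp hbar 2 = exp hbar ^ 2"
  using qp_of_nat[of hbar 2] by simp

lemma qp_nonzero: "qp hbar x \<noteq> 0"
  by (simp add: qp_def)

lemma minus_inverse_eq_0_iff:
  fixes x :: "'a::field"
  assumes "x \<noteq> 0"
  shows "x - inverse x = 0 \<longleftrightarrow> x ^ 2 = 1"
  using assms by (auto simp: field_simps power2_eq_square)

definition qint :: "'a::field \<Rightarrow> nat \<Rightarrow> 'a" where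
  "qint Q n = (Q ^ n - inverse Q ^ n) / (Q - inverse Q)"

definition qbracket :: "complex \<Rightarrow> complex \<Rightarrow> complex" where
  "qbracket hbar z = (qp hbar z - qp hbar (- z)) / (exp hbar - inverse (exp hbar))"

lemma qint_Suc:
  fixes Q :: "'a::field"
  assumes "Q \<noteq> 0" "Q ^ 2 \<noteq> 1"
  shows "qint Q (Suc n) = Q * qint Q n + inverse Q ^ n"
proof -
  have D: "Q - inverse Q \<noteq> 0" using assms minus_inverse_eq_0_iff[of Q] by auto
  have "Q ^ Suc n - inverse Q ^ Suc n = Q * (Q ^ n - inverse Q ^ n) + inverse Q ^ n * (Q - inverse Q)"
    using assms(1) by (simp add: algebra_simps)
  then show ?thesis
    unfolding qint_def using D by (simp add: add_divide_distrib)
qed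

lemma qint_eq_0_iff:
  fixes Q :: "'a::field"
  assumes "Q \<noteq> 0"
  shows "qint Q n = 0 \<longleftrightarrow> Q ^ (2 * n) = 1 \<or> Q ^ 2 = 1"
  using assms minus_inverse_eq_0_iff[of "Q ^ n"] minus_inverse_eq_0_iff[of Q]
  by (simp add: qint_def power_inverse power_mult mult.commute[of 2])

lemma qbracket_eq_0_iff:
  assumes "exp hbar ^ 2 \<noteq> 1"
  shows "qbracket hbar z = 0 \<longleftrightarrow> qp hbar (2 * z) = 1"
proof -
  have "exp hbar - inverse (exp hbar) \<noteq> 0"
    using assms minus_inverse_eq_0_iff[of "exp hbar"] exp_not_eq_zero by blast
  then have "qbracket hbar z = 0 \<longleftrightarrow> qp hbar z - inverse (qp hbar z) = 0"
    unfolding qbracket_def qp_minus divide_eq_0_iff by blast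
  moreover have "qp hbar z ^ 2 = qp hbar (2 * z)"
    by (simp only: power2_eq_square mult_2 qp_add)
  ultimately show ?thesis
    using minus_inverse_eq_0_iff[OF qp_nonzero] by metis
qed

lemma sum_geometric_pair:
  fixes Q R A B :: "'a::comm_ring_1"
  assumes "Q * R = 1"
  shows "(Q - R) * (\<Sum>k<n. A * R ^ (2 * k) - B * Q ^ (2 * k))
    = (Q ^ n - R ^ n) * (A * Q * R ^ n - B * R * Q ^ n)"
proof (induction n)
  case (Suc n)
  have "A * Q * R ^ Suc n = A * (Q * R) * R ^ n" "B * R * Q ^ Suc n = B * (Q * R) * Q ^ n"
    by (simp_all only: power_Suc ac_simps)
  then have QR: "A * Q * R ^ Suc n = A * R ^ n" "B * R * Q ^ Suc n = B * Q ^ n"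
    using assms by simp_all
  have "(Q - R) * (\<Sum>k<Suc n. A * R ^ (2 * k) - B * Q ^ (2 * k))
      = (Q ^ n - R ^ n) * (A * Q * R ^ n - B * R * Q ^ n) + (Q - R) * (A * R ^ n * R ^ n - B * Q ^ n * Q ^ n)"
    unfolding sum.lessThan_Suc distrib_left Suc.IH by (simp add: mult_2 power_add mult.assoc)
  also have "\<dots> = (Q ^ Suc n - R ^ Suc n) * (A * R ^ n - B * Q ^ n)"
    by (simp add: algebra_simps)
  finally show ?case unfolding QR .
qed simp

lemma sum_qbracket:
  "(\<Sum>k<n. qbracket hbar (z - 2 * of_nat k)) = qint (exp hbar) n * qbracket hbar (z + 1 - of_nat n)"
proof -
  define A where "A = qp hbar z"
  have A: "qp hbar (z - 2 * of_nat k) = A * inverse (exp hbar) ^ (2 * k)"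
    "qp hbar (- (z - 2 * of_nat k)) = inverse A * exp hbar ^ (2 * k)" for k
    using qp_of_nat[of hbar "2 * k"]
    by (simp_all add: A_def qp_diff qp_minus power_inverse mult_ac)
  have B: "qp hbar (z + 1 - of_nat n) = A * exp hbar * inverse (exp hbar) ^ n"
    "qp hbar (- (z + 1 - of_nat n)) = inverse A * inverse (exp hbar) * exp hbar ^ n"
    using qp_of_nat[of hbar n] qp_of_nat[of hbar 1]
    by (simp_all add: A_def qp_diff qp_add qp_minus power_inverse mult_ac)
  define D where "D = exp hbar - inverse (exp hbar)"
  define S where "S = (\<Sum>k<n. A * inverse (exp hbar) ^ (2 * k) - inverse A * exp hbar ^ (2 * k))"
  have DS: "D * S = (exp hbar ^ n - inverse (exp hbar) ^ n)
      * (A * exp hbar * inverse (exp hbar) ^ n - inverse A * inverse (exp hbar) * exp hbar ^ n)"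
    unfolding D_def S_def
    by (rule sum_geometric_pair) simp
  have "(\<Sum>k<n. qbracket hbar (z - 2 * of_nat k)) = S / D"
    unfolding qbracket_def A S_def D_def by (simp add: sum_divide_distrib)
  also have "\<dots> = (D * S) / (D * D)"
    by (cases "D = 0") simp_all
  also have "\<dots> = (exp hbar ^ n - inverse (exp hbar) ^ n) / D
      * ((A * exp hbar * inverse (exp hbar) ^ n - inverse A * inverse (exp hbar) * exp hbar ^ n) / D)"
    by (simp only: DS times_divide_times_eq)
  also have "\<dots> = qint (exp hbar) n * qbracket hbar (z + 1 - of_nat n)"
    unfolding qint_def qbracket_def B D_def ..
  finally show ?thesis .
qed

text \<open>The coefficient of \<open>f\<^sub>\<alpha>\<close> in \<open>[e\<^sub>\<beta>, f\<^sub>\<gamma>]\<close> on a vector of \<open>h\<^sub>\<beta>\<close>-weight \<open>t\<close>.\<close>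

lemma eb_fb_coefficient_shift:
  fixes hbar t :: complex
  defines "D \<equiv> exp hbar ^ 2 - inverse (exp hbar) ^ 2"
  assumes "exp hbar ^ 4 \<noteq> 1"
  shows "(qp hbar (t + 2) - qp hbar (- (t + 2))) / D
      - inverse (exp hbar) ^ 2 * ((qp hbar t - qp hbar (- t)) / D) = qp hbar t"
proof -
  have "D \<noteq> 0"
    using assms(2) minus_inverse_eq_0_iff[of "exp hbar ^ 2"]
    by (simp add: D_def power_inverse flip: power_mult)
  have P: "qp hbar (t + 2) = qp hbar t * exp hbar ^ 2"
    using qp_of_nat[of hbar 2] by (simp add: qp_add)
  have M: "qp hbar (- (t + 2)) = inverse (qp hbar t) * inverse (exp hbar) ^ 2"
    unfolding qp_minus P by (simp add: power_inverse)
  have "(qp hbar (t + 2) - qp hbar (- (t + 2))) - inverse (exp hbar) ^ 2 * (qp hbar t - qp hbar (- t))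
      = qp hbar t * D"
    unfolding P M qp_minus[of hbar t] D_def by (simp add: algebra_simps)
  moreover have "a / D - c * (b / D) = (a - c * b) / D" for a b c
    by (simp add: diff_divide_distrib)
  ultimately show ?thesis
    using \<open>D \<noteq> 0\<close> by simp
qed

lemma qp_minus_2_of_nat: "qp hbar (- (2 * of_nat n)) = inverse (exp hbar ^ 2) ^ n"
  using qp_of_nat[of hbar "2 * n"] by (simp add: qp_minus power_mult power_inverse)

section \<open>Weight components of invariant subspaces\<close>

lemma (in vector_space) linear_image_span_subset:
  assumes "Vector_Spaces.linear scale scale f" and "f ` B \<subseteq> span B"
  shows "f ` span B \<subseteq> span B"
proof -
  interpret f: Vector_Spaces.linear scale scale f by fact
  have "f ` span B = span (f ` B)" by (simp add: f.span_image)
  also have "\<dots> \<subseteq> span B" using assms(2) by (rule span_minimal) simp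
  finally show ?thesis .
qed

lemma (in vector_space) span_range_obtain_sum:
  assumes "x \<in> span (range b)"
  obtains I c where "finite I" "x = (\<Sum>i\<in>I. scale (c i) (b i))"
proof -
  obtain t r where t: "finite t" "t \<subseteq> range b" and x: "x = (\<Sum>y\<in>t. scale (r y) y)"
    using assms unfolding span_explicit by blast
  obtain I where I: "inj_on b I" "t = b ` I"
    using subset_image_inj[of t b UNIV] t(2) by blast
  have "finite I" using t(1) I finite_image_iff by blast
  moreover have "x = (\<Sum>i\<in>I. scale (r (b i)) (b i))"
    unfolding x I(2) sum.reindex[OF I(1)] by simp
  ultimately show ?thesis by (rule that)
qed

lemma (in vector_space) invariant_subspace_contains_eigencomponent:
  assumes W: "subspace W"
    and H: "\<And>k. Vector_Spaces.linear scale scale (H k)" "\<And>k. H k ` W \<subseteq> W"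
    and eigen: "\<And>k i. H k (b i) = scale (wt k i) (b i)"
    and separating: "\<And>i j. i \<noteq> j \<Longrightarrow> \<exists>k. wt k i \<noteq> wt k j"
  shows "finite I \<Longrightarrow> (\<Sum>i\<in>I. scale (c i) (b i)) \<in> W \<Longrightarrow> j \<in> I \<Longrightarrow> scale (c j) (b j) \<in> W"
proof (induction I arbitrary: c rule: finite_psubset_induct)
  case (psubset I)
  show ?case
  proof (cases "I = {j}")
    case True
    then show ?thesis using psubset.prems by simp
  next
    case False
    then obtain i where i: "i \<in> I" "i \<noteq> j" using psubset.prems(2) by blast
    then obtain k where k: "wt k j \<noteq> wt k i" using separating by metis
    interpret Hk: Vector_Spaces.linear scale scale "H k" by (rule H(1))
    let ?x = "\<Sum>l\<in>I. scale (c l) (b l)"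
    have "H k ?x - scale (wt k i) ?x \<in> W"
      using psubset.prems(1) H(2) W by (intro subspace_diff subspace_scale) auto
    also have "H k ?x - scale (wt k i) ?x = (\<Sum>l\<in>I. scale (c l * (wt k l - wt k i)) (b l))"
      by (simp add: Hk.sum Hk.scale eigen scale_sum_right sum_subtractf[symmetric] algebra_simps)
    also have "\<dots> = (\<Sum>l\<in>I - {i}. scale (c l * (wt k l - wt k i)) (b l))"
      using psubset.hyps i(1) by (intro sum.mono_neutral_right) auto
    finally have "scale (c j * (wt k j - wt k i)) (b j) \<in> W"
      using psubset.IH[of "I - {i}" "\<lambda>l. c l * (wt k l - wt k i)"] i psubset.prems(2) by blast
    then have "scale (inverse (wt k j - wt k i)) (scale (c j * (wt k j - wt k i)) (b j)) \<in> W"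
      by (rule subspace_scale[OF W])
    moreover have "inverse (wt k j - wt k i) * (c j * (wt k j - wt k i)) = c j"
      using k by simp
    ultimately show ?thesis by simp
  qed
qed

lemma (in vector_space) invariant_subspace_obtain_eigenvector:
  assumes W: "subspace W"
    and H: "\<And>k. Vector_Spaces.linear scale scale (H k)" "\<And>k. H k ` W \<subseteq> W"
    and eigen: "\<And>k i. H k (b i) = scale (wt k i) (b i)"
    and separating: "\<And>i j. i \<noteq> j \<Longrightarrow> \<exists>k. wt k i \<noteq> wt k j"
    and x: "x \<in> W" "x \<in> span (range b)" "x \<noteq> 0"
  obtains i where "b i \<in> W" "b i \<noteq> 0"
proof -
  obtain I c where I: "finite I" and x_sum: "x = (\<Sum>i\<in>I. scale (c i) (b i))"
    using span_range_obtain_sum[OF x(2)] by blast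
  obtain i where i: "i \<in> I" "scale (c i) (b i) \<noteq> 0"
    using x(3) unfolding x_sum by (meson sum.neutral)
  have "scale (c i) (b i) \<in> W"
    using invariant_subspace_contains_eigencomponent[where H = H and b = b and wt = wt,
        OF W H eigen separating I] x(1) i(1)
    unfolding x_sum by blast
  then have "scale (inverse (c i)) (scale (c i) (b i)) \<in> W"
    by (rule subspace_scale[OF W])
  then show ?thesis using i(2) by (intro that) auto
qed

section \<open>Representations of \<open>U\<^sub>q(sp(4))\<close>\<close>

lemma comm_eq_scaleD:
  assumes "comm A B = (\<lambda>w. sc k (B w))"
  shows "A (B w) = B (A w) + sc k (B w)"
  using fun_cong[OF assms, of w] by (simp add: comm_def algebra_simps)

lemma comm_eq_0D:
  assumes "comm A B = (\<lambda>w. 0)"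
  shows "A (B w) = B (A w)"
  using fun_cong[OF assms, of w] by (simp add: comm_def)

locale Uq_sp4_rep =
  fixes hbar :: complex and sc :: "complex \<Rightarrow> 'a::ab_group_add \<Rightarrow> 'a"
    and ea eb fa fb ha hb :: "'a \<Rightarrow> 'a"
  assumes module: "Uq_sp4_module hbar sc ea eb fa fb ha hb"
begin

abbreviation q :: complex where "q \<equiv> exp hbar"
abbreviation f\<gamma> :: "'a \<Rightarrow> 'a" where "f\<gamma> \<equiv> f_gamma hbar sc fa fb"
abbreviation f\<delta> :: "'a \<Rightarrow> 'a" where "f\<delta> \<equiv> f_delta hbar sc fa fb"
abbreviation weight :: "complex \<Rightarrow> complex \<Rightarrow> 'a \<Rightarrow> bool"
  where "weight \<equiv> is_weight_vec sc ha hb"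

sublocale vector_space sc
  using module by (simp add: Uq_sp4_module_def Let_def)

lemma linear_generator: "A \<in> {ea, eb, fa, fb, ha, hb} \<Longrightarrow> Vector_Spaces.linear sc sc A"
  using module by (auto simp: Uq_sp4_module_def Let_def)

sublocale ea: Vector_Spaces.linear sc sc ea by (rule linear_generator) simp
sublocale eb: Vector_Spaces.linear sc sc eb by (rule linear_generator) simp
sublocale fa: Vector_Spaces.linear sc sc fa by (rule linear_generator) simp
sublocale fb: Vector_Spaces.linear sc sc fb by (rule linear_generator) simp
sublocale ha: Vector_Spaces.linear sc sc ha by (rule linear_generator) simp
sublocale hb: Vector_Spaces.linear sc sc hb by (rule linear_generator) simp

lemmas generator_linear_simps[simp] =
  ea.add ea.scale ea.diff eb.add eb.scale eb.diff fa.add fa.scale fa.diff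
  fb.add fb.scale fb.diff ha.add ha.scale ha.diff hb.add hb.scale hb.diff

lemma ha_fa: "ha (fa w) = fa (ha w) + sc (-2) (fa w)"
  and ha_fb: "ha (fb w) = fb (ha w) + sc 2 (fb w)"
  and hb_fa: "hb (fa w) = fa (hb w) + sc 2 (fa w)"
  and hb_fb: "hb (fb w) = fb (hb w) + sc (-4) (fb w)"
  using comm_eq_scaleD[of ha fa sc "-2"] comm_eq_scaleD[of ha fb sc 2]
    comm_eq_scaleD[of hb fa sc 2] comm_eq_scaleD[of hb fb sc "-4"] module
  by (simp_all add: Uq_sp4_module_def Let_def)

lemma ea_fb: "ea (fb w) = fb (ea w)"
  and eb_fa: "eb (fa w) = fa (eb w)"
  using comm_eq_0D[of ea fb] comm_eq_0D[of eb fa] module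
  by (simp_all add: Uq_sp4_module_def Let_def)

lemma ea_fa_weight:
  assumes "weight s t w"
  shows "ea (fa w) = fa (ea w) + sc (qbracket hbar s) w"
proof -
  have "comm ea fa w = sc (qbracket hbar s) w"
    using module assms by (auto simp: Uq_sp4_module_def Let_def qbracket_def)
  then show ?thesis by (simp add: comm_def algebra_simps)
qed

lemma eb_fb_weight:
  assumes "weight s t w"
  shows "eb (fb w) = fb (eb w) + sc ((qp hbar t - qp hbar (- t)) / (q ^ 2 - inverse q ^ 2)) w"
proof -
  have "comm eb fb w = sc ((qp hbar t - qp hbar (- t)) / (q ^ 2 - inverse q ^ 2)) w"
    using module assms by (auto simp: Uq_sp4_module_def Let_def)
  then show ?thesis by (simp add: comm_def algebra_simps)
qed

lemma fb_fa_fa_fa: "fb (fa (fa (fa w))) = fa (fa (fa (fb w)))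
    - sc (q ^ 2 + 1 + inverse q ^ 2) (fa (fa (fb (fa w))))
    + sc (q ^ 2 + 1 + inverse q ^ 2) (fa (fb (fa (fa w))))"
  using module by (simp add: Uq_sp4_module_def Let_def serre3_def algebra_simps)

lemma fb_fb_fa: "fb (fb (fa w)) = sc (q ^ 2 + inverse q ^ 2) (fb (fa (fb w))) - fa (fb (fb w))"
  using module by (simp add: Uq_sp4_module_def Let_def serre2_def algebra_simps)

lemma weight_fa: "weight s t w \<Longrightarrow> weight (s - 2) (t + 2) (fa w)"
  and weight_fb: "weight s t w \<Longrightarrow> weight (s + 2) (t - 4) (fb w)"
  and weight_scale: "weight s t w \<Longrightarrow> weight s t (sc c w)"
  and weight_diff: "weight s t w \<Longrightarrow> weight s t w' \<Longrightarrow> weight s t (w - w')"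
  by (simp_all add: is_weight_vec_def ha_fa hb_fa ha_fb hb_fb algebra_simps scale_left_commute)

lemma f_gamma_apply: "f\<gamma> w = fb (fa w) - sc (inverse q ^ 2) (fa (fb w))"
  by (simp add: f_gamma_def)

lemma weight_f_gamma: "weight s t w \<Longrightarrow> weight s (t - 2) (f\<gamma> w)"
  using weight_fb[OF weight_fa] weight_fa[OF weight_fb]
  by (fastforce simp: f_gamma_apply intro: weight_diff weight_scale)

lemma f_delta_apply:
  "f\<delta> w = fb (fa (fa w)) - sc (q ^ 2 + inverse q ^ 2) (fa (fb (fa w))) + fa (fa (fb w))"
proof -
  have "q ^ 2 * inverse q ^ 2 = 1" by (simp add: field_simps)
  then show ?thesis by (simp add: f_delta_def f_gamma_apply algebra_simps)
qed

sublocale f\<gamma>: Vector_Spaces.linear sc sc f\<gamma>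
  unfolding Vector_Spaces.linear_iff f_gamma_apply
  by (simp add: algebra_simps scale_left_commute vector_space_axioms)

sublocale f\<delta>: Vector_Spaces.linear sc sc f\<delta>
  unfolding Vector_Spaces.linear_iff f_delta_apply
  by (simp add: algebra_simps scale_left_commute vector_space_axioms)

lemma f_delta_fa: "f\<delta> (fa w) = fa (f\<delta> w)"
  by (simp add: f_delta_apply fb_fa_fa_fa algebra_simps)

lemma f_delta_fb: "f\<delta> (fb w) = fb (f\<delta> w)"
  using fb_fb_fa[of "fa w"] arg_cong[OF fb_fb_fa[of w], of fa]
  by (simp add: f_delta_apply algebra_simps)

lemma f_delta_f_gamma: "f\<delta> (f\<gamma> w) = f\<gamma> (f\<delta> w)"
  by (simp add: f_gamma_apply f\<delta>.diff f\<delta>.scale f_delta_fa f_delta_fb)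

lemma f_gamma_fa: "f\<gamma> (fa w) = f\<delta> w + sc (q ^ 2) (fa (f\<gamma> w))"
  by (simp add: f_delta_def)

lemma fb_fa: "fb (fa w) = f\<gamma> w + sc (inverse q ^ 2) (fa (fb w))"
  by (simp add: f_gamma_apply)

lemma fb_f_gamma: "fb (f\<gamma> w) = sc (q ^ 2) (f\<gamma> (fb w))"
proof -
  have "q ^ 2 * inverse q ^ 2 = 1" by (simp add: field_simps)
  then show ?thesis by (simp add: f_gamma_apply fb_fb_fa algebra_simps)
qed

lemma ea_f_gamma_lowest:
  assumes "ea w = 0" "fb w = 0" "weight s t w"
  shows "ea (f\<gamma> w) = 0"
  using ea_fa_weight[OF assms(3)] assms(1,2) by (simp add: f_gamma_apply ea_fb)

lemma eb_f_gamma: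
  assumes "q ^ 4 \<noteq> 1" and w: "weight s t w"
  shows "eb (f\<gamma> w) = f\<gamma> (eb w) + sc (qp hbar t) (fa w)"
proof -
  have "eb (f\<gamma> w) = f\<gamma> (eb w)
    + sc ((qp hbar (t + 2) - qp hbar (- (t + 2))) / (q ^ 2 - inverse q ^ 2)
      - inverse q ^ 2 * ((qp hbar t - qp hbar (- t)) / (q ^ 2 - inverse q ^ 2))) (fa w)"
    using eb_fb_weight[OF weight_fa[OF w]] eb_fb_weight[OF w]
    by (simp add: f_gamma_apply eb_fa algebra_simps scale_left_diff_distrib)
  then show ?thesis
    unfolding eb_fb_coefficient_shift[OF assms(1)] .
qed

end

section \<open>The module generated by a highest weight vector\<close>

locale Uq_sp4_hw = Uq_sp4_rep +
  fixes v and a :: complex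
  assumes q_generic: "\<And>n. n > 0 \<Longrightarrow> q ^ n \<noteq> 1"
    and a_cond: "qp hbar (2 * a) = - qp hbar (- 2)"
    and highest_weight: "ea v = 0" "eb v = 0" "fb v = 0" "hb v = 0" "ha v = sc a v"
    and f_delta_v: "f\<delta> v = 0"
begin

lemma q2_neq_1: "q ^ 2 \<noteq> 1"
  using q_generic[of 2] by simp

lemma q4_neq_1: "q ^ 4 \<noteq> 1"
  using q_generic[of 4] by simp

definition pbw :: "nat \<Rightarrow> nat \<Rightarrow> 'a" where
  "pbw p r = (fa ^^ p) ((f\<gamma> ^^ r) v)"

lemma pbw_Suc: "pbw (Suc p) r = fa (pbw p r)"
  by (simp add: pbw_def)

lemma pbw_0_0: "pbw 0 0 = v"
  by (simp add: pbw_def)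

lemma pbw_0_Suc: "pbw 0 (Suc r) = f\<gamma> (pbw 0 r)"
  by (simp add: pbw_def)

lemma weight_pbw: "weight (a - 2 * of_nat p) (2 * of_nat p - 2 * of_nat r) (pbw p r)"
proof (induction p)
  case 0
  show ?case
  proof (induction r)
    case 0
    then show ?case using highest_weight by (simp add: is_weight_vec_def pbw_0_0)
  next
    case (Suc r)
    have "2 * of_nat 0 - 2 * of_nat (Suc r) = (2 * of_nat 0 - 2 * of_nat r) - (2::complex)"
      by simp
    then show ?case using weight_f_gamma[OF Suc] by (simp only: pbw_0_Suc)
  qed
next
  case (Suc p)
  have "a - 2 * of_nat (Suc p) = (a - 2 * of_nat p) - 2"
    "2 * of_nat (Suc p) - 2 * of_nat r = (2 * of_nat p - 2 * of_nat r) + (2::complex)"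
    by simp_all
  then show ?case using weight_fa[OF Suc] by (simp only: pbw_Suc)
qed

lemma f_delta_pbw: "f\<delta> (pbw p r) = 0"
proof (induction p)
  case 0
  show ?case by (induction r) (simp_all add: pbw_0_0 pbw_0_Suc f_delta_v f_delta_f_gamma)
qed (simp add: pbw_Suc f_delta_fa)

lemma f_gamma_pbw: "f\<gamma> (pbw p r) = sc (q ^ (2 * p)) (pbw p (Suc r))"
proof (induction p)
  case 0
  then show ?case by (simp add: pbw_def)
next
  case (Suc p)
  have "q ^ (2 * Suc p) = q ^ 2 * q ^ (2 * p)"
    by (simp add: mult_Suc_right power_add power2_eq_square)
  with Suc show ?case by (simp add: pbw_Suc f_gamma_fa f_delta_pbw)
qed

lemma fb_pbw_0: "fb (pbw 0 r) = 0"
  by (induction r) (simp_all add: pbw_0_0 pbw_0_Suc highest_weight fb_f_gamma)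

lemma fb_pbw_1: "fb (pbw 1 r) = pbw 0 (Suc r)"
  using f_gamma_pbw[of 0 r] by (simp add: pbw_Suc[of 0, simplified] fb_fa fb_pbw_0)

lemma fb_pbw_Suc: "\<exists>c. fb (pbw (Suc p) r) = sc c (pbw p (Suc r))"
proof (induction p)
  case 0
  then show ?case using fb_pbw_1 by (metis One_nat_def scale_one)
next
  case (Suc p)
  then obtain c where c: "fb (pbw (Suc p) r) = sc c (pbw p (Suc r))" ..
  have "fb (pbw (Suc (Suc p)) r) = f\<gamma> (pbw (Suc p) r) + sc (inverse q ^ 2) (fa (fb (pbw (Suc p) r)))"
    by (simp only: pbw_Suc[of "Suc p"] fb_fa)
  also have "\<dots> = sc (q ^ (2 * Suc p) + inverse q ^ 2 * c) (pbw (Suc p) (Suc r))"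
    by (simp add: f_gamma_pbw c pbw_Suc[symmetric] scale_left_distrib)
  finally show ?case ..
qed

lemma ea_pbw_0: "ea (pbw 0 r) = 0"
proof (induction r)
  case (Suc r)
  then show ?case
    using ea_f_gamma_lowest[OF Suc fb_pbw_0 weight_pbw] by (simp add: pbw_0_Suc)
qed (simp add: pbw_0_0 highest_weight)

lemma ea_pbw_Suc: "ea (pbw (Suc p) r) = sc (\<Sum>k\<le>p. qbracket hbar (a - 2 * of_nat k)) (pbw p r)"
proof (induction p)
  case 0
  then show ?case using ea_fa_weight[OF weight_pbw[of 0 r]] by (simp add: pbw_Suc ea_pbw_0)
next
  case (Suc p)
  then show ?case
    using ea_fa_weight[OF weight_pbw[of "Suc p" r]]
    by (simp add: pbw_Suc[of "Suc p"] pbw_Suc[of p, symmetric] scale_left_distrib)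
qed

lemma eb_pbw_0: "eb (pbw p 0) = 0"
  by (induction p) (simp_all add: pbw_0_0 pbw_Suc eb_fa highest_weight)

lemma eb_pbw_0_Suc: "eb (pbw 0 (Suc r)) = sc (qint (q ^ 2) (Suc r)) (pbw 1 r)"
proof (induction r)
  case 0
  have "qint (q ^ 2) 1 = 1"
    using qint_Suc[of "q ^ 2" 0] q4_neq_1 by (simp add: qint_def flip: power_mult)
  then show ?case
    using eb_f_gamma[OF q4_neq_1 weight_pbw[of 0 0]]
    by (simp add: pbw_0_Suc pbw_0_0 pbw_Suc[of 0] highest_weight qp_def)
next
  case (Suc r)
  have "eb (pbw 0 (Suc (Suc r)))
      = f\<gamma> (eb (pbw 0 (Suc r))) + sc (qp hbar (2 * of_nat 0 - 2 * of_nat (Suc r))) (pbw 1 (Suc r))"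
    using eb_f_gamma[OF q4_neq_1 weight_pbw[of 0 "Suc r"]]
    by (simp only: pbw_0_Suc pbw_Suc One_nat_def)
  also have "qp hbar (2 * of_nat 0 - 2 * of_nat (Suc r)) = inverse (q ^ 2) ^ Suc r"
    using qp_minus_2_of_nat[of hbar "Suc r"] by simp
  also have "f\<gamma> (eb (pbw 0 (Suc r))) + sc (inverse (q ^ 2) ^ Suc r) (pbw 1 (Suc r))
      = sc (q ^ 2 * qint (q ^ 2) (Suc r) + inverse (q ^ 2) ^ Suc r) (pbw 1 (Suc r))"
    by (simp add: Suc f\<gamma>.scale f_gamma_pbw scale_left_distrib)
  also have "q ^ 2 * qint (q ^ 2) (Suc r) + inverse (q ^ 2) ^ Suc r = qint (q ^ 2) (Suc (Suc r))"
    using qint_Suc[of "q ^ 2" "Suc r"] q4_neq_1 by (simp flip: power_mult)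
  finally show ?case .
qed

lemma eb_pbw_Suc: "eb (pbw p (Suc r)) = sc (qint (q ^ 2) (Suc r)) (pbw (Suc p) r)"
  by (induction p) (simp_all add: eb_pbw_0_Suc pbw_Suc eb_fa)

lemma ea_coefficient_nonzero: "(\<Sum>k\<le>p. qbracket hbar (a - 2 * of_nat k)) \<noteq> 0"
proof -
  have "qint q (Suc p) \<noteq> 0"
    using q_generic[of "2 * Suc p"] q2_neq_1 by (simp add: qint_eq_0_iff)
  moreover have "qp hbar (2 * (a + 1 - of_nat (Suc p))) \<noteq> 1"
  proof
    have arg: "2 * (a + 1 - of_nat (Suc p)) = 2 * a - of_nat (2 * p)"
      by (simp add: algebra_simps)
    assume "qp hbar (2 * (a + 1 - of_nat (Suc p))) = 1"
    then have "- inverse (q ^ 2) * inverse (q ^ (2 * p)) = 1"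
      unfolding arg qp_diff a_cond qp_minus qp_2 qp_of_nat .
    then have "q ^ (2 * Suc p) = - 1"
      by (simp add: field_simps mult_Suc_right power_add power2_eq_square)
    then have "q ^ (2 * Suc p + 2 * Suc p) = 1"
      by (simp only: power_add) simp
    moreover have "q ^ (2 * Suc p + 2 * Suc p) \<noteq> 1"
      by (rule q_generic) simp
    ultimately show False by contradiction
  qed
  ultimately show ?thesis
    using q2_neq_1 by (simp add: lessThan_Suc_atMost[symmetric] sum_qbracket qbracket_eq_0_iff)
qed

lemma eb_coefficient_nonzero: "qint (q ^ 2) (Suc r) \<noteq> 0"
proof -
  have "(q ^ 2) ^ (2 * Suc r) \<noteq> 1" "(q ^ 2) ^ 2 \<noteq> 1"
    unfolding power_mult[symmetric] by (rule q_generic, simp)+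
  then show ?thesis
    using qint_eq_0_iff[of "q ^ 2" "Suc r"] by simp
qed

abbreviation pbw_span :: "'a set" where
  "pbw_span \<equiv> span (range (case_prod pbw))"

lemma scale_pbw_in_span: "sc c (pbw p r) \<in> pbw_span"
  by (intro span_scale span_base) auto

lemma pbw_in_span: "pbw p r \<in> pbw_span"
  using scale_pbw_in_span[of 1] by simp

lemma generator_pbw_in_span:
  assumes "A \<in> {ea, eb, fa, fb, ha, hb}"
  shows "A (pbw p r) \<in> pbw_span"
proof -
  have "ea (pbw p r) \<in> pbw_span"
    by (cases p) (simp_all add: ea_pbw_0 ea_pbw_Suc span_zero scale_pbw_in_span)
  moreover have "eb (pbw p r) \<in> pbw_span"
    by (cases r) (simp_all add: eb_pbw_0 eb_pbw_Suc span_zero scale_pbw_in_span)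
  moreover have "fb (pbw p r) \<in> pbw_span"
  proof (cases p)
    case (Suc p')
    then show ?thesis using fb_pbw_Suc[of p' r] scale_pbw_in_span by auto
  qed (simp add: fb_pbw_0 span_zero)
  moreover have "ha (pbw p r) \<in> pbw_span" "hb (pbw p r) \<in> pbw_span"
    using weight_pbw[of p r] by (simp_all add: is_weight_vec_def scale_pbw_in_span)
  ultimately show ?thesis
    using assms pbw_in_span[of "Suc p" r] by (auto simp: pbw_Suc)
qed

lemma pbw_span_submodule: "is_submodule sc ea eb fa fb ha hb pbw_span"
  unfolding is_submodule_def
proof (intro conjI ballI)
  fix A assume A: "A \<in> {ea, eb, fa, fb, ha, hb}"
  show "A ` pbw_span \<subseteq> pbw_span"
    by (rule linear_image_span_subset[OF linear_generator[OF A]])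
      (auto intro: generator_pbw_in_span[OF A])
qed simp

lemma submodule_pbw_imp_pbw_0:
  assumes W: "is_submodule sc ea eb fa fb ha hb W"
  shows "pbw p r \<in> W \<Longrightarrow> pbw 0 r \<in> W"
proof (induction p)
  case (Suc p)
  have "sc (inverse (\<Sum>k\<le>p. qbracket hbar (a - 2 * of_nat k))) (ea (pbw (Suc p) r)) \<in> W"
    using W Suc.prems unfolding is_submodule_def by (auto intro!: subspace_scale)
  then show ?case
    using ea_coefficient_nonzero by (intro Suc.IH) (simp add: ea_pbw_Suc)
qed

lemma submodule_pbw_imp_v:
  assumes W: "is_submodule sc ea eb fa fb ha hb W"
  shows "pbw p r \<in> W \<Longrightarrow> v \<in> W"
proof (induction r arbitrary: p)
  case 0
  then show ?case using submodule_pbw_imp_pbw_0[OF W] by (metis pbw_0_0)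
next
  case (Suc r)
  have "pbw 0 (Suc r) \<in> W"
    using submodule_pbw_imp_pbw_0[OF W Suc.prems] .
  then have "sc (inverse (qint (q ^ 2) (Suc r))) (eb (pbw 0 (Suc r))) \<in> W"
    using W unfolding is_submodule_def by (auto intro!: subspace_scale)
  then show ?case
    using eb_coefficient_nonzero by (intro Suc.IH[of 1]) (simp add: eb_pbw_Suc)
qed

lemma weight_pbw_separating:
  assumes "(p, r) \<noteq> (p', r')"
  shows "\<exists>k. (if k then a - 2 * of_nat p else 2 * of_nat p - 2 * of_nat r)
    \<noteq> (if k then a - 2 * of_nat p' else 2 * of_nat p' - 2 * of_nat r')"
proof (cases "p = p'")
  case True
  with assms show ?thesis by (intro exI[of _ False]) simp
qed (intro exI[of _ True], simp)

lemma nonzero_submodule_contains_v: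
  assumes W: "is_submodule sc ea eb fa fb ha hb W"
    and w: "w \<in> W" "w \<in> pbw_span" "w \<noteq> 0"
  shows "v \<in> W"
proof -
  let ?H = "\<lambda>k. if k then ha else hb"
  let ?wt = "\<lambda>k (p, r). if k then a - 2 * of_nat p else 2 * of_nat p - 2 * of_nat r"
  obtain i where "case_prod pbw i \<in> W"
  proof (rule invariant_subspace_obtain_eigenvector[of W ?H "case_prod pbw" ?wt])
    show "subspace W" using W by (simp add: is_submodule_def)
    show "Vector_Spaces.linear sc sc (?H k)" "?H k ` W \<subseteq> W" for k
      using W linear_generator by (simp_all add: is_submodule_def)
    show "?H k (case_prod pbw i) = sc (?wt k i) (case_prod pbw i)" for k i
      using weight_pbw[of "fst i" "snd i"] by (cases i) (simp add: is_weight_vec_def)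
    show "\<exists>k. ?wt k i \<noteq> ?wt k j" if "i \<noteq> j" for i j
      using that weight_pbw_separating by (cases i; cases j) auto
  qed (use w in auto)
  then show ?thesis
    using submodule_pbw_imp_v[OF W] by (cases i) simp
qed

end

theorem mainTheorem4:
  fixes hbar :: complex and lam :: "complex \<times> complex"
    and sc :: "complex \<Rightarrow> 'v::ab_group_add \<Rightarrow> 'v"
    and ea eb fa fb ha hb :: "'v \<Rightarrow> 'v" and v :: 'v
  assumes q_generic: "\<forall>n::nat. n > 0 \<longrightarrow> exp hbar ^ n \<noteq> 1"
    and lam_beta: "ip_beta lam = 0"
    and lam_cond: "qp hbar (2 * ip_alpha lam) = - qp hbar (-2)"
    and modV: "Uq_sp4_module hbar sc ea eb fa fb ha hb"
    and v_nz: "v \<noteq> 0"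
    and v_hw: "ea v = 0" "eb v = 0" "fb v = 0" "hb v = 0" "ha v = sc (ip_alpha lam) v"
    and v_fdelta: "f_delta hbar sc fa fb v = 0"
    and v_gen: "\<forall>W. is_submodule sc ea eb fa fb ha hb W \<and> v \<in> W \<longrightarrow> W = UNIV"
  shows "irreducible_module sc ea eb fa fb ha hb"
proof -
  interpret M: Uq_sp4_hw hbar sc ea eb fa fb ha hb v "ip_alpha lam"
    using modV q_generic lam_cond v_hw v_fdelta by unfold_locales auto
  have span_UNIV: "M.pbw_span = UNIV"
    using v_gen M.pbw_span_submodule M.pbw_in_span[of 0 0] by (simp add: M.pbw_0_0)
  show ?thesis
    unfolding irreducible_module_def
  proof (intro conjI allI impI)
    show "(UNIV :: 'v set) \<noteq> {0}" using v_nz by blast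
    fix W assume W: "is_submodule sc ea eb fa fb ha hb W"
    show "W = {0} \<or> W = UNIV"
    proof (cases "W \<subseteq> {0}")
      case True
      then show ?thesis using W M.subspace_0 by (auto simp: is_submodule_def)
    next
      case False
      then obtain w where "w \<in> W" "w \<noteq> 0" by blast
      then have "v \<in> W" using M.nonzero_submodule_contains_v[OF W] span_UNIV by blast
      then show ?thesis using v_gen W by blast
    qed
  qed
qed

end
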